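(* Bob can win the $2$-Expanded Coloring Game on an uncolored $P_4^+$, where $P_4^+$ is the tree with vertices $x_1,x_2,x_3,x_4,x_3'$ and edges $x_1x_2,\ x_2x_3,\ x_3x_4,\ x_3x_3'$.
   Context: A color is legal for an uncolored vertex $v$ if no neighbor of $v$ has that color. The $k$-coloring game on a (partially colored) graph: Alice and Bob alternate turns, Alice first, each coloring an uncolored vertex with a legal color from a set of $k$ colors; Bob wins if at some point an uncolored vertex has no legal color, Alice wins if all vertices become colored. The $k$-Expanded Coloring Game ($k$-ECG) on a partially colored forest is the same as the $k$-coloring game except that on her turn Alice may choose not to color a vertex, and if she does not color a vertex she may instead add to the forest a single new colored leaf (a new vertex joined to exactly one existing vertex, colored with one of the $k$ colors). *)

theory Defs
  imports Main
begin

text \<open>A position of the game: a finite vertex set (vertices are naturals, so fresh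
vertices for new leaves are always available), an undirected edge set (stored as
ordered pairs, adjacency is symmetric), and a partial colouring (None = uncoloured).\<close>

type_synonym pos = "nat set \<times> (nat \<times> nat) set \<times> (nat \<Rightarrow> nat option)"

definition adj :: "(nat \<times> nat) set \<Rightarrow> nat \<Rightarrow> nat \<Rightarrow> bool" where
  "adj E u v \<longleftrightarrow> (u, v) \<in> E \<or> (v, u) \<in> E"

definition legal :: "nat \<Rightarrow> (nat \<times> nat) set \<Rightarrow> (nat \<Rightarrow> nat option) \<Rightarrow> nat \<Rightarrow> nat \<Rightarrow> bool" where
  "legal k E c v a \<longleftrightarrow> a < k \<and> (\<forall>u. adj E v u \<longrightarrow> c u \<noteq> Some a)"

definition blocked :: "nat \<Rightarrow> pos \<Rightarrow> bool" where
  "blocked k p = (case p of (V, E, c) \<Rightarrow> (\<exists>v\<in>V. c v = None \<and> \<not> (\<exists>a. legal k E c v a)))"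

definition all_colored :: "pos \<Rightarrow> bool" where
  "all_colored p = (case p of (V, E, c) \<Rightarrow> (\<forall>v\<in>V. c v \<noteq> None))"

definition color_move :: "nat \<Rightarrow> pos \<Rightarrow> pos \<Rightarrow> bool" where
  "color_move k p p' = (case p of (V, E, c) \<Rightarrow>
     (\<exists>v a. v \<in> V \<and> c v = None \<and> legal k E c v a \<and> p' = (V, E, c(v := Some a))))"

definition alice_move :: "nat \<Rightarrow> pos \<Rightarrow> pos \<Rightarrow> bool" where
  "alice_move k p p' \<longleftrightarrow> color_move k p p' \<or> p' = p \<or>
     (case p of (V, E, c) \<Rightarrow>
        (\<exists>w u a. w \<notin> V \<and> u \<in> V \<and> a < k \<and>
           p' = (insert w V, insert (u, w) E, c(w := Some a))))"

text \<open>bob_wins_A k p: Bob has a winning strategy from p with Alice to move;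
bob_wins_B k p: Bob has a winning strategy from p with Bob to move.
Bob wins as soon as a position is blocked; Alice wins once all vertices are coloured
(and the position is not blocked).\<close>
inductive bob_wins_A :: "nat \<Rightarrow> pos \<Rightarrow> bool" and bob_wins_B :: "nat \<Rightarrow> pos \<Rightarrow> bool"
  for k :: nat where
  A_blocked: "blocked k p \<Longrightarrow> bob_wins_A k p"
| A_step: "\<not> all_colored p \<Longrightarrow> (\<forall>p'. alice_move k p p' \<longrightarrow> bob_wins_B k p') \<Longrightarrow> bob_wins_A k p"
| B_blocked: "blocked k p \<Longrightarrow> bob_wins_B k p"
| B_step: "\<not> all_colored p \<Longrightarrow> color_move k p p' \<Longrightarrow> bob_wins_A k p' \<Longrightarrow> bob_wins_B k p"

text \<open>Uncoloured P_4^+: x1 = 1, x2 = 2, x3 = 3, x4 = 4, x3' = 5.\<close>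
definition P4plus :: pos where
  "P4plus = ({1, 2, 3, 4, 5}, {(1, 2), (2, 3), (3, 4), (3, 5)}, (\<lambda>_. None))"

end

theory Submission
  imports Defs
begin

text \<open>With two colours, an uncoloured vertex v having one coloured neighbour x and one
uncoloured neighbour y is a threat: Bob colours y with the colour that x lacks, and v
is left without a legal colour. In the uncoloured P_4^+ every vertex has a vertex at
distance two and every vertex has a neighbour, so whatever Alice colours, or wherever
she attaches a coloured leaf, Bob completes such a fork at once. If Alice passes, Bob
colours the leaf x_4; then x_3 is threatened from both of its remaining neighbours
x_2 and x_3', and no single reply of Alice defuses both threats (colouring x_3 itself
only moves the fork to x_2 with x_1).\<close>

lemma blocked_two_colours:
  assumes "v \<in> V" "c v = None" "adj E v x" "adj E v y"
    and "c x = Some a" "c y = Some (1 - a)" "a < 2"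
  shows "blocked 2 (V, E, c)"
proof -
  have "\<not> legal 2 E c v b" for b
  proof
    assume "legal 2 E c v b"
    then have "b < 2" "c x \<noteq> Some b" "c y \<noteq> Some b"
      using assms(3,4) unfolding legal_def by auto
    moreover have "b = a \<or> b = 1 - a" using \<open>b < 2\<close> assms(7) by arith
    ultimately show False using assms(5,6) by auto
  qed
  then show ?thesis using assms(1,2) unfolding blocked_def by auto
qed

lemma color_moveI:
  "v \<in> V \<Longrightarrow> c v = None \<Longrightarrow> legal k E c v a \<Longrightarrow> color_move k (V, E, c) (V, E, c(v := Some a))"
  unfolding color_move_def by auto

lemma bob_wins_B_by_reply:
  assumes "color_move k p p'" "bob_wins_A k p'"
  shows "bob_wins_B k p"
proof (rule B_step[OF _ assms])
  show "\<not> all_colored p" using assms(1) unfolding color_move_def all_colored_def by auto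
qed

lemma bob_wins_B_fork:
  assumes "v \<in> V" "c v = None" "adj E v x" "c x = Some a" "a < 2"
    and "y \<in> V" "c y = None" "adj E v y" "y \<noteq> v" "legal 2 E c y (1 - a)"
  shows "bob_wins_B 2 (V, E, c)"
proof -
  let ?p' = "(V, E, c(y := Some (1 - a)))"
  have move: "color_move 2 (V, E, c) ?p'"
    using assms(6,7,10) by (rule color_moveI)
  have "x \<noteq> y" using assms(4,7) by auto
  then have "blocked 2 ?p'"
    using assms(1-5,8,9) by (intro blocked_two_colours[where x = x and y = y and a = a]) auto
  then have "bob_wins_A 2 ?p'" by (rule A_blocked)
  with move show ?thesis by (rule bob_wins_B_by_reply)
qed

lemma legal_other_colour:
  assumes "a < 2" "\<And>u. c u = None \<or> c u = Some a"
  shows "legal 2 E c y (1 - a)"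
proof -
  have "1 - a \<noteq> a" using assms(1) by arith
  then have "c u \<noteq> Some (1 - a)" for u using assms(2)[of u] by auto
  then show ?thesis unfolding legal_def by simp
qed

lemma bob_wins_AI:
  assumes "\<not> all_colored (V, E, c)"
    and "\<And>v a. v \<in> V \<Longrightarrow> c v = None \<Longrightarrow> legal k E c v a \<Longrightarrow> bob_wins_B k (V, E, c(v := Some a))"
    and "bob_wins_B k (V, E, c)"
    and "\<And>w u a. w \<notin> V \<Longrightarrow> u \<in> V \<Longrightarrow> a < k \<Longrightarrow>
      bob_wins_B k (insert w V, insert (u, w) E, c(w := Some a))"
  shows "bob_wins_A k (V, E, c)"
proof (rule A_step[OF assms(1)], intro allI impI)
  fix p' assume "alice_move k (V, E, c) p'"
  then show "bob_wins_B k p'" using assms(2-4) unfolding alice_move_def color_move_def by auto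
qed

abbreviation P4plus_V :: "nat set" where "P4plus_V \<equiv> {1, 2, 3, 4, 5}"
abbreviation P4plus_E :: "(nat \<times> nat) set" where "P4plus_E \<equiv> {(1, 2), (2, 3), (3, 4), (3, 5)}"

lemma P4plus_neighbour: "u \<in> P4plus_V \<Longrightarrow> \<exists>y\<in>P4plus_V. adj P4plus_E u y"
  unfolding adj_def by auto

lemma P4plus_distance_two:
  "v \<in> P4plus_V \<Longrightarrow> \<exists>m\<in>P4plus_V. \<exists>y\<in>P4plus_V. adj P4plus_E m v \<and> adj P4plus_E m y \<and> y \<noteq> v"
  unfolding adj_def by auto

lemma P4plus_adj_irrefl: "adj P4plus_E u v \<Longrightarrow> u \<noteq> v"
  unfolding adj_def by auto

lemma P4plus_bob_wins_B_after_colour: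
  assumes "v \<in> P4plus_V" "a < 2"
  shows "bob_wins_B 2 (P4plus_V, P4plus_E, (\<lambda>_. None)(v := Some a))"
proof -
  obtain m y where "m \<in> P4plus_V" "y \<in> P4plus_V" "adj P4plus_E m v" "adj P4plus_E m y" "y \<noteq> v"
    using P4plus_distance_two[OF assms(1)] by blast
  moreover have "m \<noteq> v" "m \<noteq> y" using calculation(3,4) by (blast dest: P4plus_adj_irrefl)+
  ultimately show ?thesis
    using assms(2) by (intro bob_wins_B_fork[where v = m and x = v and y = y and a = a] legal_other_colour) auto
qed

lemma P4plus_bob_wins_B_after_leaf:
  assumes "w \<notin> P4plus_V" "u \<in> P4plus_V" "b < 2"
  shows "bob_wins_B 2 (insert w P4plus_V, insert (u, w) P4plus_E, (\<lambda>_. None)(w := Some b))"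
proof -
  obtain y where "y \<in> P4plus_V" "adj P4plus_E u y"
    using P4plus_neighbour[OF assms(2)] by blast
  moreover have "u \<noteq> y" using calculation(2) by (rule P4plus_adj_irrefl)
  ultimately show ?thesis
    using assms by (intro bob_wins_B_fork[where v = u and x = w and y = y and a = b] legal_other_colour)
      (auto simp: adj_def)
qed

lemma P4plus_bob_wins_A_after_x4:
  "bob_wins_A 2 (P4plus_V, P4plus_E, (\<lambda>_. None)(4 := Some 0))"
proof -
  have fork: "bob_wins_B 2 (V, E, c)"
    if "P4plus_V \<subseteq> V" "P4plus_E \<subseteq> E" "c 3 = None" "c 4 = Some 0" "y \<in> {2, 5}" "c y = None"
      "legal 2 E c y 1" for V E c y
    using that by (intro bob_wins_B_fork[where v = 3 and x = 4 and y = y and a = 0]) (auto simp: adj_def)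
  show ?thesis
  proof (rule bob_wins_AI)
    show "\<not> all_colored (P4plus_V, P4plus_E, (\<lambda>_. None)(4 := Some 0))"
      unfolding all_colored_def by auto
  next
    fix v a
    assume v: "v \<in> P4plus_V" "((\<lambda>_. None)(4 := Some 0)) v = None"
      and a: "legal 2 P4plus_E ((\<lambda>_. None)(4 := Some 0)) v a"
    have "v \<in> {1, 2, 3, 5}" "a = 0 \<or> a = 1" using v a by (auto simp: legal_def)
    moreover have "a = 1" if "v = 3" using a that by (auto simp: legal_def adj_def)
    ultimately consider "v = 3" "a = 1" | "v \<in> {2, 5}" "a = 1" | "v = 5" "a = 0"
      | "v \<in> {1, 2}" "a = 0 \<or> v = 1"
      by auto
    then show "bob_wins_B 2 (P4plus_V, P4plus_E, ((\<lambda>_. None)(4 := Some 0))(v := Some a))"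
    proof cases
      case 1
      then show ?thesis
        by (intro bob_wins_B_fork[where v = 2 and x = 3 and y = 1 and a = 1]) (auto simp: adj_def legal_def)
    next
      case 2
      then show ?thesis
        by (intro B_blocked blocked_two_colours[where v = 3 and x = 4 and y = v and a = 0]) (auto simp: adj_def)
    next
      case 3
      then show ?thesis by (intro fork[where y = 2]) (auto simp: adj_def legal_def)
    next
      case 4
      then show ?thesis by (intro fork[where y = 5]) (auto simp: adj_def legal_def)
    qed
  next
    show "bob_wins_B 2 (P4plus_V, P4plus_E, (\<lambda>_. None)(4 := Some 0))"
      by (intro fork[where y = 5]) (auto simp: adj_def legal_def)
  next
    fix w u b
    assume "w \<notin> P4plus_V"
    then show "bob_wins_B 2 (insert w P4plus_V, insert (u, w) P4plus_E, ((\<lambda>_. None)(4 := Some 0))(w := Some b))"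
      by (cases "u = 5"; intro fork[where y = "if u = 5 then 2 else 5"]) (auto simp: adj_def legal_def)
  qed
qed

theorem lemma4p2:
  shows "bob_wins_A 2 P4plus"
  unfolding P4plus_def
proof (rule bob_wins_AI)
  show "\<not> all_colored (P4plus_V, P4plus_E, \<lambda>_. None)"
    unfolding all_colored_def by auto
next
  fix v a
  assume "v \<in> P4plus_V" "legal 2 P4plus_E (\<lambda>_. None) v a"
  then show "bob_wins_B 2 (P4plus_V, P4plus_E, (\<lambda>_. None)(v := Some a))"
    by (intro P4plus_bob_wins_B_after_colour) (simp_all add: legal_def)
next
  show "bob_wins_B 2 (P4plus_V, P4plus_E, \<lambda>_. None)"
    by (rule bob_wins_B_by_reply[OF color_moveI P4plus_bob_wins_A_after_x4]) (auto simp: legal_def)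
next
  fix w u and a :: nat
  assume "w \<notin> P4plus_V" "u \<in> P4plus_V" "a < 2"
  then show "bob_wins_B 2 (insert w P4plus_V, insert (u, w) P4plus_E, (\<lambda>_. None)(w := Some a))"
    by (rule P4plus_bob_wins_B_after_leaf)
qed

end
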